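(* Let $\mathbb{F}$ be a field and let $q\in\mathbb{F}$ be a root of unity with $q\neq 1$; let $p\geq 2$ be the least positive integer with $q^p=1$. Let $\mathcal{H}$ be the unital associative $\mathbb{F}$-algebra generated by $A,B$ subject to $AB-qBA=I$, with $[f,g]=fg-gf$ and $\Lambda:=AB-BA$. Let $\mathcal{L}$ be the Lie subalgebra of $\mathcal{H}$ generated by $A,B$, and let $\mathcal{N}$ be the linear subspace spanned by all $B^m\Lambda^n$ and $\Lambda^nA^m$ with $m,n$ positive integers both congruent to $0$ modulo $p$. Then the sum $\mathcal{L}+\mathcal{N}$ is direct, i.e. $\mathcal{L}\cap\mathcal{N}=\{0\}$.
   Context: The elements $\Lambda^k$, $\Lambda^kA^l$, $B^l\Lambda^k$ ($k\geq 0$, $l\geq 1$ integers, $\Lambda^0=I$) form a basis of $\mathcal{H}$. *)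

theory Defs
  imports Complex_Main
begin

definition is_falgebra :: "('f::field \<Rightarrow> 'h::ring_1 \<Rightarrow> 'h) \<Rightarrow> bool" where
  "is_falgebra sc \<longleftrightarrow> module sc \<and>
     (\<forall>c x y. sc c (x * y) = sc c x * y \<and> sc c (x * y) = x * sc c y)"

definition lie_subalgebra :: "('f::field \<Rightarrow> 'h::ring_1 \<Rightarrow> 'h) \<Rightarrow> 'h set \<Rightarrow> bool" where
  "lie_subalgebra sc S \<longleftrightarrow> module.subspace sc S \<and> (\<forall>x\<in>S. \<forall>y\<in>S. x * y - y * x \<in> S)"

definition lie_generated :: "('f::field \<Rightarrow> 'h::ring_1 \<Rightarrow> 'h) \<Rightarrow> 'h set \<Rightarrow> 'h set" where
  "lie_generated sc X = \<Inter>{S. X \<subseteq> S \<and> lie_subalgebra sc S}"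

definition Lam :: "'h::ring_1 \<Rightarrow> 'h \<Rightarrow> 'h" where
  "Lam A B = A * B - B * A"

text \<open>The PBW-type basis: index (k,l) gives Lambda^k if l = 0, Lambda^k A^l if l > 0,
  and B^(-l) Lambda^k if l < 0.\<close>
definition hbasis :: "'h::ring_1 \<Rightarrow> 'h \<Rightarrow> nat \<times> int \<Rightarrow> 'h" where
  "hbasis A B i = (case i of (k, l) \<Rightarrow>
     if l = 0 then Lam A B ^ k
     else if l > 0 then Lam A B ^ k * A ^ nat l
     else B ^ nat (- l) * Lam A B ^ k)"

definition Nset :: "'h::ring_1 \<Rightarrow> 'h \<Rightarrow> nat \<Rightarrow> 'h set" where
  "Nset A B p = {B ^ m * Lam A B ^ n | m n. 0 < m \<and> 0 < n \<and> p dvd m \<and> p dvd n}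
              \<union> {Lam A B ^ n * A ^ m | m n. 0 < m \<and> 0 < n \<and> p dvd m \<and> p dvd n}"

end

theory Submission
  imports Defs
begin

(* Let T be the linear map that fixes the basis vectors \<Lambda>^k A^l and B^l \<Lambda>^k with p dividing
   both k and l and kills all other basis vectors; T is the identity on N.  The relations
   A \<Lambda> = q \<Lambda> A and \<Lambda> B = q B \<Lambda> give explicit formulas for the commutators of the basis
   vectors with A and with B: each is a combination of basis vectors whose coefficients vanish,
   because q^p = 1, at the indices fixed by T.  Since x(yz) - (yz)x = [xy, z] + [zx, y], the
   elements y with T [x, y] = 0 for all x form a subalgebra; it contains A and B, hence is
   everything.  So ker T is a Lie subalgebra containing A and B, hence contains L, and
   L \<inter> N \<subseteq> ker T \<inter> {x. T x = x} = {0}. *)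

lemma power_left_commute: "a ^ n * (a * x) = a * (a ^ n * x)" for a :: "'a::monoid_mult"
  by (simp flip: mult.assoc power_Suc power_Suc2)

lemma hbasis_nonneg: "hbasis A B (k, int l) = Lam A B ^ k * A ^ l"
  by (simp add: hbasis_def)

lemma hbasis_nonpos: "hbasis A B (k, - int m) = B ^ m * Lam A B ^ k"
  by (simp add: hbasis_def)

locale q_heisenberg =
  fixes A B Q :: "'a::ring_1"
  assumes Q_central: "Q * x = x * Q"
    and q_relation: "A * B - Q * (B * A) = 1"
begin

abbreviation \<Lambda> :: 'a where "\<Lambda> \<equiv> Lam A B"

lemma Q_power_central: "Q ^ n * x = x * Q ^ n"
  by (simp add: power_commuting_commutes Q_central)

lemma Q_power_left_commute: "x * (Q ^ n * y) = Q ^ n * (x * y)"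
  by (metis Q_power_central mult.assoc)

lemma Q_left_commute: "x * (Q * y) = Q * (x * y)"
  using Q_power_left_commute[of x 1] by simp

(* Only instances: as a general rewrite rule, x * (Q * y) = Q * (x * y) loops on Q * (Q * y). *)
lemmas Q_left_commutes = power_left_commute[of Q]
  Q_left_commute[of A] Q_left_commute[of B] Q_left_commute[of \<Lambda>]
  Q_left_commute[of "A ^ m" for m] Q_left_commute[of "B ^ m" for m]
  Q_left_commute[of "\<Lambda> ^ m" for m]
  Q_power_left_commute[of A] Q_power_left_commute[of B] Q_power_left_commute[of \<Lambda>]
  Q_power_left_commute[of "A ^ m" for m] Q_power_left_commute[of "B ^ m" for m]
  Q_power_left_commute[of "\<Lambda> ^ m" for m]

lemma A_B_swap: "A * B = 1 + Q * (B * A)"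
  using q_relation by (simp add: algebra_simps)

lemma A_B_swap_left: "A * (B * x) = x + Q * (B * (A * x))"
  by (simp add: A_B_swap algebra_simps flip: mult.assoc)

lemma Lam_eq: "\<Lambda> = 1 + (Q - 1) * (B * A)"
  by (simp add: Lam_def A_B_swap algebra_simps)

lemma A_Lam: "A * \<Lambda> = Q * (\<Lambda> * A)"
proof -
  have "A * \<Lambda> = A * (A * B) - (A * B) * A"
    by (simp add: Lam_def algebra_simps)
  also have "\<dots> = Q * (A * B * A) - Q * (B * A * A)"
    by (simp add: A_B_swap A_B_swap_left algebra_simps Q_left_commutes)
  also have "\<dots> = Q * (\<Lambda> * A)"
    by (simp add: Lam_def algebra_simps)
  finally show ?thesis .
qed

lemma Lam_B: "\<Lambda> * B = Q * (B * \<Lambda>)"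
proof -
  have "\<Lambda> * B = (A * B) * B - B * (A * B)"
    by (simp add: Lam_def algebra_simps)
  also have "\<dots> = Q * (B * (A * B)) - Q * (B * (B * A))"
    by (simp add: A_B_swap A_B_swap_left algebra_simps Q_left_commutes)
  also have "\<dots> = Q * (B * \<Lambda>)"
    by (simp add: Lam_def algebra_simps)
  finally show ?thesis .
qed

lemma A_Lam_power: "A * \<Lambda> ^ k = Q ^ k * (\<Lambda> ^ k * A)"
proof (induction k)
  case (Suc k)
  have "A * \<Lambda> ^ Suc k = Q * (\<Lambda> * (A * \<Lambda> ^ k))"
    by (simp add: A_Lam Q_left_commutes flip: mult.assoc)
  also have "\<dots> = Q ^ Suc k * (\<Lambda> ^ Suc k * A)"
    by (simp add: Suc Q_left_commutes mult.assoc)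
  finally show ?case .
qed simp

lemma Lam_power_B: "\<Lambda> ^ k * B = Q ^ k * (B * \<Lambda> ^ k)"
proof (induction k)
  case (Suc k)
  have "\<Lambda> ^ Suc k * B = \<Lambda> ^ k * (\<Lambda> * B)"
    by (simp only: power_Suc2 mult.assoc)
  also have "\<dots> = Q * (\<Lambda> ^ k * B * \<Lambda>)"
    by (simp add: Lam_B mult.assoc Q_left_commutes)
  also have "\<dots> = Q ^ Suc k * (B * \<Lambda> ^ Suc k)"
    by (simp add: Suc Q_left_commutes mult.assoc power_commutes)
  finally show ?case .
qed simp

lemma A_B_power: "(Q - 1) * (A * B ^ Suc n) = B ^ n * (Q ^ Suc n * \<Lambda> - 1)"
proof (induction n)
  case 0
  show ?case by (simp add: A_B_swap Lam_eq algebra_simps Q_left_commutes)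
next
  case (Suc n)
  have "(Q - 1) * (A * B ^ Suc (Suc n)) = (Q - 1) * (A * B ^ Suc n) * B"
    by (simp only: power_Suc2[of B "Suc n"] mult.assoc)
  also have "\<dots> = B ^ n * (Q ^ Suc n * \<Lambda> - 1) * B"
    by (simp only: Suc)
  also have "\<dots> = B ^ n * (Q ^ Suc n * (\<Lambda> * B) - B)"
    by (simp add: algebra_simps)
  also have "\<dots> = B ^ Suc n * (Q ^ Suc (Suc n) * \<Lambda> - 1)"
    by (simp add: Lam_B algebra_simps Q_left_commutes power_left_commute power_commutes)
  finally show ?case .
qed

lemma A_power_B: "(Q - 1) * (A ^ Suc n * B) = (Q ^ Suc n * \<Lambda> - 1) * A ^ n"
proof (induction n)
  case 0
  show ?case by (simp add: A_B_swap Lam_eq algebra_simps Q_left_commutes)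
next
  case (Suc n)
  have "(Q - 1) * (A ^ Suc (Suc n) * B) = A * ((Q - 1) * (A ^ Suc n * B))"
    by (simp add: algebra_simps Q_left_commutes)
  also have "\<dots> = A * ((Q ^ Suc n * \<Lambda> - 1) * A ^ n)"
    by (simp only: Suc)
  also have "\<dots> = (Q ^ Suc n * (A * \<Lambda>) - A) * A ^ n"
    by (simp add: algebra_simps Q_left_commutes)
  also have "\<dots> = (Q ^ Suc (Suc n) * \<Lambda> - 1) * A ^ Suc n"
    by (simp add: A_Lam algebra_simps Q_left_commutes)
  finally show ?case .
qed

lemma commutator_Lam_power_A_power_A:
  "\<Lambda> ^ k * A ^ l * A - A * (\<Lambda> ^ k * A ^ l) = (1 - Q ^ k) * (\<Lambda> ^ k * A ^ Suc l)"
proof -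
  have "A * (\<Lambda> ^ k * A ^ l) = Q ^ k * (\<Lambda> ^ k * A ^ Suc l)"
    by (simp add: A_Lam_power flip: mult.assoc)
  then show ?thesis
    by (simp add: algebra_simps power_commutes)
qed

lemma commutator_B_power_Lam_power_B:
  "B ^ m * \<Lambda> ^ k * B - B * (B ^ m * \<Lambda> ^ k) = (Q ^ k - 1) * (B ^ Suc m * \<Lambda> ^ k)"
proof -
  have "B ^ m * \<Lambda> ^ k * B = Q ^ k * (B ^ m * B * \<Lambda> ^ k)"
    by (simp add: Lam_power_B mult.assoc Q_left_commutes)
  also have "\<dots> = Q ^ k * (B ^ Suc m * \<Lambda> ^ k)"
    by (simp only: power_Suc2)
  finally have "B ^ m * \<Lambda> ^ k * B = Q ^ k * (B ^ Suc m * \<Lambda> ^ k)" .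
  then show ?thesis
    by (simp add: algebra_simps)
qed

lemma B_Lam_power_A: "(Q - 1) * (Q ^ k * (B * \<Lambda> ^ k * A)) = \<Lambda> ^ k * (\<Lambda> - 1)"
proof -
  have "(Q - 1) * (Q ^ k * (B * \<Lambda> ^ k * A)) = (Q - 1) * (\<Lambda> ^ k * B * A)"
    by (simp add: Lam_power_B mult.assoc)
  also have "\<dots> = \<Lambda> ^ k * ((Q - 1) * (B * A))"
    by (simp add: algebra_simps Q_left_commutes)
  finally show ?thesis
    by (simp add: Lam_eq)
qed

lemma commutator_Lam_power_A_power_B:
  "Q ^ k * (Q - 1) * (\<Lambda> ^ k * A ^ Suc n * B - B * (\<Lambda> ^ k * A ^ Suc n))
    = (Q ^ (k + Suc n) - 1) * (\<Lambda> ^ Suc k * A ^ n) + (1 - Q ^ k) * (\<Lambda> ^ k * A ^ n)"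
proof -
  have "Q ^ k * (Q - 1) * (\<Lambda> ^ k * A ^ Suc n * B)
      = Q ^ k * (\<Lambda> ^ k * ((Q - 1) * (A ^ Suc n * B)))"
    by (simp add: algebra_simps Q_left_commutes)
  also have "\<dots> = Q ^ k * (\<Lambda> ^ k * ((Q ^ Suc n * \<Lambda> - 1) * A ^ n))"
    by (simp only: A_power_B)
  finally have left: "Q ^ k * (Q - 1) * (\<Lambda> ^ k * A ^ Suc n * B) = \<dots>" .
  have "Q ^ k * (Q - 1) * (B * (\<Lambda> ^ k * A ^ Suc n))
      = (Q - 1) * (Q ^ k * (B * \<Lambda> ^ k * A)) * A ^ n"
    by (simp add: algebra_simps Q_left_commutes)
  also have "\<dots> = \<Lambda> ^ k * (\<Lambda> - 1) * A ^ n"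
    by (simp only: B_Lam_power_A)
  finally have right: "Q ^ k * (Q - 1) * (B * (\<Lambda> ^ k * A ^ Suc n)) = \<dots>" .
  have "Q ^ k * (Q - 1) * (\<Lambda> ^ k * A ^ Suc n * B - B * (\<Lambda> ^ k * A ^ Suc n))
      = Q ^ k * (\<Lambda> ^ k * ((Q ^ Suc n * \<Lambda> - 1) * A ^ n)) - \<Lambda> ^ k * (\<Lambda> - 1) * A ^ n"
    by (simp only: right_diff_distrib[of "Q ^ k * (Q - 1)"] left right)
  also have "\<dots> = (Q ^ (k + Suc n) - 1) * (\<Lambda> ^ Suc k * A ^ n) + (1 - Q ^ k) * (\<Lambda> ^ k * A ^ n)"
    by (simp add: algebra_simps Q_left_commutes power_add power_left_commute)
  finally show ?thesis .
qed

lemma commutator_B_power_Lam_power_A: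
  "Q ^ k * (Q - 1) * (B ^ Suc n * \<Lambda> ^ k * A - A * (B ^ Suc n * \<Lambda> ^ k))
    = (1 - Q ^ (k + Suc n)) * (B ^ n * \<Lambda> ^ Suc k) + (Q ^ k - 1) * (B ^ n * \<Lambda> ^ k)"
proof -
  have "Q ^ k * (Q - 1) * (B ^ Suc n * \<Lambda> ^ k * A)
      = B ^ n * ((Q - 1) * (Q ^ k * (B * \<Lambda> ^ k * A)))"
    by (simp add: algebra_simps Q_left_commutes power_left_commute)
  also have "\<dots> = B ^ n * (\<Lambda> ^ k * (\<Lambda> - 1))"
    by (simp only: B_Lam_power_A)
  finally have left: "Q ^ k * (Q - 1) * (B ^ Suc n * \<Lambda> ^ k * A) = \<dots>" .
  have "Q ^ k * (Q - 1) * (A * (B ^ Suc n * \<Lambda> ^ k))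
      = Q ^ k * ((Q - 1) * (A * B ^ Suc n) * \<Lambda> ^ k)"
    by (simp add: algebra_simps Q_left_commutes)
  also have "\<dots> = Q ^ k * (B ^ n * (Q ^ Suc n * \<Lambda> - 1) * \<Lambda> ^ k)"
    by (simp only: A_B_power)
  finally have right: "Q ^ k * (Q - 1) * (A * (B ^ Suc n * \<Lambda> ^ k)) = \<dots>" .
  have "Q ^ k * (Q - 1) * (B ^ Suc n * \<Lambda> ^ k * A - A * (B ^ Suc n * \<Lambda> ^ k))
      = B ^ n * (\<Lambda> ^ k * (\<Lambda> - 1)) - Q ^ k * (B ^ n * (Q ^ Suc n * \<Lambda> - 1) * \<Lambda> ^ k)"
    by (simp only: right_diff_distrib[of "Q ^ k * (Q - 1)"] left right)
  also have "\<dots> = (1 - Q ^ (k + Suc n)) * (B ^ n * \<Lambda> ^ Suc k) + (Q ^ k - 1) * (B ^ n * \<Lambda> ^ k)"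
    by (simp add: algebra_simps Q_left_commutes power_add power_left_commute power_commutes)
  finally show ?thesis .
qed

end

definition subalgebra :: "('f::field \<Rightarrow> 'h::ring_1 \<Rightarrow> 'h) \<Rightarrow> 'h set \<Rightarrow> bool" where
  "subalgebra sc S \<longleftrightarrow> module.subspace sc S \<and> 1 \<in> S \<and> (\<forall>x\<in>S. \<forall>y\<in>S. x * y \<in> S)"

lemma subalgebra_power: "subalgebra sc S \<Longrightarrow> x \<in> S \<Longrightarrow> x ^ n \<in> S"
  by (induction n) (auto simp: subalgebra_def)

locale falgebra =
  fixes sc :: "'f::field \<Rightarrow> 'h::ring_1 \<Rightarrow> 'h"
  assumes is_falgebra: "is_falgebra sc"
begin

sublocale vector_space sc
  using is_falgebra by (simp add: is_falgebra_def module_iff_vector_space)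

lemma scale_mult_left: "sc c x * y = sc c (x * y)"
  using is_falgebra by (simp add: is_falgebra_def)

lemma scale_mult_right: "x * sc c y = sc c (x * y)"
  using is_falgebra unfolding is_falgebra_def by metis

lemma scale_one_mult: "sc c 1 * x = sc c x"
  by (simp add: scale_mult_left)

lemma scale_one_central: "sc c 1 * x = x * sc c 1"
  by (simp add: scale_mult_left scale_mult_right)

lemma scale_one_power: "sc c 1 ^ n = sc (c ^ n) 1"
  by (induction n) (simp_all add: scale_one_mult mult.commute)

lemma one_minus_scale_one: "1 - sc c 1 = sc (1 - c) 1"
  by (simp add: scale_left_diff_distrib)

lemma scale_one_minus_one: "sc c 1 - 1 = sc (c - 1) 1"
  by (simp add: scale_left_diff_distrib)

lemmas scale_one_simps = scale_one_mult scale_one_power one_minus_scale_one scale_one_minus_one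

lemma linear_commutator_left: "Vector_Spaces.linear sc sc (\<lambda>x. x * y - y * x)"
  by (simp add: Vector_Spaces.linear_iff vector_space_axioms algebra_simps
      scale_mult_left scale_mult_right)

lemma linear_commutator_right: "Vector_Spaces.linear sc sc (\<lambda>y. x * y - y * x)"
  by (simp add: Vector_Spaces.linear_iff vector_space_axioms algebra_simps
      scale_mult_left scale_mult_right)

lemma subspace_commutator_kernel_left:
  assumes "Vector_Spaces.linear sc sc T"
  shows "subspace {x. T (x * y - y * x) = 0}"
proof -
  interpret Vector_Spaces.linear sc sc "T \<circ> (\<lambda>x. x * y - y * x)"
    by (rule Vector_Spaces.linear_compose[OF linear_commutator_left assms])
  show ?thesis
    using subspace_kernel by simp
qed

lemma subspace_commutator_kernel_right:
  assumes "Vector_Spaces.linear sc sc T"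
  shows "subspace {y. T (x * y - y * x) = 0}"
proof -
  interpret Vector_Spaces.linear sc sc "T \<circ> (\<lambda>y. x * y - y * x)"
    by (rule Vector_Spaces.linear_compose[OF linear_commutator_right assms])
  show ?thesis
    using subspace_kernel by simp
qed

lemma subalgebra_commutator_annihilator:
  assumes T: "Vector_Spaces.linear sc sc T"
  shows "subalgebra sc {y. \<forall>x. T (x * y - y * x) = 0}"
proof -
  interpret T: Vector_Spaces.linear sc sc T by (fact T)
  have "{y. \<forall>x. T (x * y - y * x) = 0} = (\<Inter>x. {y. T (x * y - y * x) = 0})"
    by auto
  then have "subspace {y. \<forall>x. T (x * y - y * x) = 0}"
    by (auto intro!: subspace_Inter subspace_commutator_kernel_right[OF T])
  moreover have "T (x * (a * b) - a * b * x) = 0"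
    if "\<forall>x. T (x * a - a * x) = 0" "\<forall>x. T (x * b - b * x) = 0" for a b x
  proof -
    have "x * (a * b) - a * b * x = ((x * a) * b - b * (x * a)) + ((b * x) * a - a * (b * x))"
      by (simp add: algebra_simps)
    then show ?thesis
      using that by (simp add: T.add)
  qed
  ultimately show ?thesis
    by (auto simp: subalgebra_def)
qed

lemma commutator_in_kernel_from_generators:
  assumes T: "Vector_Spaces.linear sc sc T"
    and S_span: "span S = UNIV"
    and S_generated: "\<And>C. subalgebra sc C \<Longrightarrow> G \<subseteq> C \<Longrightarrow> S \<subseteq> C"
    and S_G: "\<And>s g. s \<in> S \<Longrightarrow> g \<in> G \<Longrightarrow> T (s * g - g * s) = 0"
  shows "T (x * y - y * x) = 0"
proof -
  let ?C = "{y. \<forall>x. T (x * y - y * x) = 0}"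
  have "span S \<subseteq> {x. T (x * g - g * x) = 0}" if "g \<in> G" for g
    using S_G that by (intro span_minimal subspace_commutator_kernel_left[OF T]) auto
  then have "G \<subseteq> ?C"
    using S_span by auto
  then have "S \<subseteq> ?C"
    by (intro S_generated subalgebra_commutator_annihilator[OF T])
  then have "span S \<subseteq> ?C"
    using subalgebra_commutator_annihilator[OF T] by (intro span_minimal) (auto simp: subalgebra_def)
  then show ?thesis
    using S_span by auto
qed

lemma lie_generated_subset_kernel:
  assumes T: "Vector_Spaces.linear sc sc T"
    and commutators: "\<And>x y. T (x * y - y * x) = 0"
    and X: "\<And>x. x \<in> X \<Longrightarrow> T x = 0"
  shows "lie_generated sc X \<subseteq> {x. T x = 0}"
proof -
  interpret T: Vector_Spaces.linear sc sc T by (fact T)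
  have "lie_subalgebra sc {x. T x = 0}"
    using commutators T.subspace_kernel by (simp add: lie_subalgebra_def)
  moreover have "X \<subseteq> {x. T x = 0}"
    using X by blast
  ultimately show ?thesis
    unfolding lie_generated_def by blast
qed

lemma hbasis_mem_subalgebra:
  assumes "subalgebra sc S" "A \<in> S" "B \<in> S"
  shows "hbasis A B i \<in> S"
proof -
  have mult: "x * y \<in> S" if "x \<in> S" "y \<in> S" for x y
    using assms(1) that by (simp add: subalgebra_def)
  have "Lam A B \<in> S"
    using assms by (auto simp: Lam_def subalgebra_def intro: subspace_diff)
  then show ?thesis
    using assms by (auto simp: hbasis_def split: prod.split intro!: mult subalgebra_power)
qed

end

definition basis_projection ::
    "('f::field \<Rightarrow> 'v::ab_group_add \<Rightarrow> 'v) \<Rightarrow> ('i \<Rightarrow> 'v) \<Rightarrow> 'i set \<Rightarrow> 'v \<Rightarrow> 'v" where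
  "basis_projection sc b I =
     vector_space_pair.construct sc sc (range b) (\<lambda>v. if v \<in> b ` I then v else 0)"

context vector_space
begin

lemma linear_basis_projection:
  assumes "independent (range b)"
  shows "Vector_Spaces.linear scale scale (basis_projection scale b I)"
proof -
  interpret vector_space_pair scale scale ..
  show ?thesis
    unfolding basis_projection_def using assms by (rule linear_construct)
qed

lemma basis_projection_basis:
  assumes "independent (range b)" "inj b"
  shows "basis_projection scale b I (b i) = (if i \<in> I then b i else 0)"
proof -
  interpret vector_space_pair scale scale ..
  show ?thesis
    unfolding basis_projection_def using assms by (auto simp: construct_basis inj_image_mem_iff)
qed

end

locale q_heisenberg_algebra = falgebra sc for sc :: "'f::field \<Rightarrow> 'h::ring_1 \<Rightarrow> 'h" +
  fixes q :: 'f and A B :: 'h and p :: nat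
  assumes relation: "A * B - sc q (B * A) = 1"
    and basis_inj: "inj (hbasis A B)"
    and basis_independent: "independent (range (hbasis A B))"
    and basis_span: "span (range (hbasis A B)) = UNIV"
    and q_neq_1: "q \<noteq> 1"
    and p_pos: "0 < p"
    and q_power_p: "q ^ p = 1"
begin

sublocale q_heisenberg A B "sc q 1"
proof
  show "sc q 1 * x = x * sc q 1" for x
    by (rule scale_one_central)
  show "A * B - sc q 1 * (B * A) = 1"
    using relation by (simp add: scale_one_mult)
qed

lemma q_power_eq_1_if_dvd: "p dvd e \<Longrightarrow> q ^ e = 1"
  by (metis dvd_def power_mult q_power_p power_one)

lemma q_neq_0: "q \<noteq> 0"
  using q_power_p p_pos by (auto simp: power_0_left)

lemma p_neq_1: "p \<noteq> 1"
  using q_power_p q_neq_1 by auto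

lemma q_power_add_Suc_eq_1: "p dvd Suc k \<Longrightarrow> p dvd n \<Longrightarrow> q ^ (k + Suc n) = 1"
  by (metis add_Suc_shift dvd_add q_power_eq_1_if_dvd)

definition proj :: "'h \<Rightarrow> 'h" where
  "proj = basis_projection sc (hbasis A B) {(k, l). p dvd k \<and> int p dvd l}"

lemma linear_proj: "Vector_Spaces.linear sc sc proj"
  unfolding proj_def using basis_independent by (rule linear_basis_projection)

interpretation proj: Vector_Spaces.linear sc sc proj
  by (fact linear_proj)

lemma proj_hbasis:
  "proj (hbasis A B (k, l)) = (if p dvd k \<and> int p dvd l then hbasis A B (k, l) else 0)"
  unfolding proj_def using basis_independent basis_inj by (simp add: basis_projection_basis)

lemma proj_scale_hbasis_eq_0:
  assumes "p dvd k \<Longrightarrow> int p dvd l \<Longrightarrow> c = 0"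
  shows "proj (sc c (hbasis A B (k, l))) = 0"
  using assms by (auto simp: proj.scale proj_hbasis)

lemma commutator_hbasis_A_nonneg:
  "hbasis A B (k, int l) * A - A * hbasis A B (k, int l)
    = sc (1 - q ^ k) (hbasis A B (k, int (Suc l)))"
  using commutator_Lam_power_A_power_A[of k l] by (simp only: hbasis_nonneg scale_one_simps)

lemma commutator_hbasis_A_neg:
  "sc (q ^ k * (q - 1)) (hbasis A B (k, - int (Suc n)) * A - A * hbasis A B (k, - int (Suc n)))
    = sc (1 - q ^ (k + Suc n)) (hbasis A B (Suc k, - int n))
      + sc (q ^ k - 1) (hbasis A B (k, - int n))"
  using commutator_B_power_Lam_power_A[of k n]
  by (simp only: hbasis_nonpos scale_one_simps scale_scale)

lemma commutator_hbasis_B_pos: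
  "sc (q ^ k * (q - 1)) (hbasis A B (k, int (Suc n)) * B - B * hbasis A B (k, int (Suc n)))
    = sc (q ^ (k + Suc n) - 1) (hbasis A B (Suc k, int n))
      + sc (1 - q ^ k) (hbasis A B (k, int n))"
  using commutator_Lam_power_A_power_B[of k n]
  by (simp only: hbasis_nonneg scale_one_simps scale_scale)

lemma commutator_hbasis_B_nonpos:
  "hbasis A B (k, - int m) * B - B * hbasis A B (k, - int m)
    = sc (q ^ k - 1) (hbasis A B (k, - int (Suc m)))"
  using commutator_B_power_Lam_power_B[of m k] by (simp only: hbasis_nonpos scale_one_simps)

lemma proj_commutator_hbasis_A: "proj (hbasis A B (k, l) * A - A * hbasis A B (k, l)) = 0"
proof (cases l)
  case (nonneg n)
  show ?thesis
    unfolding nonneg commutator_hbasis_A_nonneg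
    by (rule proj_scale_hbasis_eq_0) (simp add: q_power_eq_1_if_dvd)
next
  case (neg n)
  have "proj (sc (1 - q ^ (k + Suc n)) (hbasis A B (Suc k, - int n))) = 0"
    by (rule proj_scale_hbasis_eq_0) (simp add: q_power_add_Suc_eq_1 del: add_Suc_right)
  moreover have "proj (sc (q ^ k - 1) (hbasis A B (k, - int n))) = 0"
    by (rule proj_scale_hbasis_eq_0) (simp add: q_power_eq_1_if_dvd)
  ultimately have "proj (sc (q ^ k * (q - 1)) (hbasis A B (k, l) * A - A * hbasis A B (k, l))) = 0"
    unfolding neg commutator_hbasis_A_neg proj.add by simp
  then show ?thesis
    using q_neq_0 q_neq_1 by (simp add: proj.scale)
qed

lemma proj_commutator_hbasis_B: "proj (hbasis A B (k, l) * B - B * hbasis A B (k, l)) = 0"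
proof (cases "- l")
  case (nonneg m)
  then have l: "l = - int m"
    by simp
  show ?thesis
    unfolding l commutator_hbasis_B_nonpos
    by (rule proj_scale_hbasis_eq_0) (simp add: q_power_eq_1_if_dvd)
next
  case (neg n)
  then have l: "l = int (Suc n)"
    by simp
  have "proj (sc (q ^ (k + Suc n) - 1) (hbasis A B (Suc k, int n))) = 0"
    by (rule proj_scale_hbasis_eq_0) (simp add: q_power_add_Suc_eq_1 del: add_Suc_right)
  moreover have "proj (sc (1 - q ^ k) (hbasis A B (k, int n))) = 0"
    by (rule proj_scale_hbasis_eq_0) (simp add: q_power_eq_1_if_dvd)
  ultimately have "proj (sc (q ^ k * (q - 1)) (hbasis A B (k, l) * B - B * hbasis A B (k, l))) = 0"
    unfolding l commutator_hbasis_B_pos proj.add by simp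
  then show ?thesis
    using q_neq_0 q_neq_1 by (simp add: proj.scale)
qed

lemma proj_commutator: "proj (x * y - y * x) = 0"
proof (rule commutator_in_kernel_from_generators[OF linear_proj basis_span])
  show "range (hbasis A B) \<subseteq> C" if "subalgebra sc C" "{A, B} \<subseteq> C" for C
    using that by (auto intro: hbasis_mem_subalgebra)
  show "proj (s * g - g * s) = 0" if "s \<in> range (hbasis A B)" "g \<in> {A, B}" for s g
    using that proj_commutator_hbasis_A proj_commutator_hbasis_B by fastforce
qed

lemma proj_A: "proj A = 0"
  using proj_hbasis[of 0 1] p_neq_1 by (simp add: hbasis_def)

lemma proj_B: "proj B = 0"
  using proj_hbasis[of 0 "-1"] p_neq_1 by (simp add: hbasis_def)

lemma span_Nset_subset_fixed_points: "span (Nset A B p) \<subseteq> {x. proj x = x}"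
proof (rule span_minimal)
  show "Nset A B p \<subseteq> {x. proj x = x}"
    by (auto simp: Nset_def proj_hbasis simp flip: hbasis_nonneg hbasis_nonpos)
  show "subspace {x. proj x = x}"
    by (auto simp: subspace_def proj.add proj.scale)
qed

end

theorem corollary1:
  fixes sc :: "'f::field \<Rightarrow> 'h::ring_1 \<Rightarrow> 'h"
    and q :: 'f and p :: nat and A B :: 'h
  assumes alg: "is_falgebra sc"
    and rel: "A * B - sc q (B * A) = 1"
    and basis_inj: "inj (hbasis A B)"
    and basis_indep: "module.independent sc (range (hbasis A B))"
    and basis_span: "module.span sc (range (hbasis A B)) = UNIV"
    and q_ne1: "q \<noteq> 1"
    and p_pos: "0 < p"
    and q_p: "q ^ p = 1"
    and p_least: "\<forall>m. 0 < m \<and> m < p \<longrightarrow> q ^ m \<noteq> 1"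
  shows "lie_generated sc {A, B} \<inter> module.span sc (Nset A B p) = {0}"
proof -
  interpret q_heisenberg_algebra sc q A B p
    by unfold_locales (fact alg rel basis_inj basis_indep basis_span q_ne1 p_pos q_p)+
  have kernel: "lie_generated sc {A, B} \<subseteq> {x. proj x = 0}"
    by (rule lie_generated_subset_kernel[OF linear_proj proj_commutator])
      (auto simp: proj_A proj_B)
  have fixed: "span (Nset A B p) \<subseteq> {x. proj x = x}"
    by (rule span_Nset_subset_fixed_points)
  have zero: "0 \<in> lie_generated sc {A, B}"
    unfolding lie_generated_def lie_subalgebra_def using subspace_0 by blast
  show ?thesis
    using kernel fixed zero span_zero by fastforce
qed

end
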